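(* Let $q\ge1$ be an integer such that $b^q\ge 2$ and suppose that $E(q,x)\ne\mathcal{A}^q\times\mathcal{A}^q$ for every $x\in[0,1)$. Then $\sigma(q)\le b^q-2+2/\alpha$, where $\alpha=\alpha(b,q)>1$ satisfies $2-\alpha=(b^q-2)\alpha(\alpha-1)$.
   Context: Standing setup: $b\ge2$ integer, $\mathcal{A}=\{0,\dots,b-1\}$, $\gamma\in(1/b,1)$, $\psi$ a $\mathbb{Z}$-periodic $C^1$ function. $S(x,\mathbf{i})=\sum_{n\ge1}\gamma^{n-1}\psi\big(\frac{x+i_1+i_2b+\cdots+i_nb^{n-1}}{b^n}\big)$, $S'=\partial_xS$. For $\mathbf{u}\in\mathcal{A}^q$, $x(\mathbf{u})=(x+u_1+u_2b+\cdots+u_qb^{q-1})/b^q$. Sequences $\mathbf{i},\mathbf{j}$ are $(\varepsilon,\delta)$-tangent at $x_0$ if $|S(x_0,\mathbf{i})-S(x_0,\mathbf{j})|\le\varepsilon$ and $|S'(x_0,\mathbf{i})-S'(x_0,\mathbf{j})|\le\delta$. $E(q,x_0;\varepsilon,\delta)$: pairs $(\mathbf{k},\mathbf{l})\in\mathcal{A}^q\times\mathcal{A}^q$ such that some concatenations $\mathbf{ku},\mathbf{lv}$ ($\mathbf{u},\mathbf{v}\in\mathcal{A}^{\mathbb{Z}^+}$) are $(\varepsilon,\delta)$-tangent at $x_0$; $E(q,x_0)=\bigcap_{\varepsilon,\delta>0}E(q,x_0;\varepsilon,\delta)$. Weight function: measurable $\omega:[0,1)\to(0,\infty)$ with $\omega,1/\omega$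 bounded. Admissible testing function of order $q$: measurable $V:[0,1)\times\mathcal{A}^q\times\mathcal{A}^q\to[0,\infty)$ such that for some $\varepsilon,\delta>0$, $V(x,\mathbf{u},\mathbf{v})V(x,\mathbf{v},\mathbf{u})\ge1$ whenever $x\in[0,1)$ and $(\mathbf{u},\mathbf{v})\in E(q,x;\varepsilon,\delta)$. $\Sigma_{V,\omega}(x)=\sup_{\mathbf{u}}\frac{\omega(x)}{\omega(x(\mathbf{u}))}\sum_{\mathbf{v}}V(x,\mathbf{u},\mathbf{v})$; $\sigma(q)=\inf_{\omega,V}\|\Sigma_{V,\omega}\|_\infty$. *)

theory Defs
  imports "HOL-Analysis.Analysis" "HOL-Probability.Essential_Supremum"
begin

(* Digit sequences in A^{Z+}: i :: nat => nat, with i 0 playing the role of i_1. *)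
definition seqs :: "nat \<Rightarrow> (nat \<Rightarrow> nat) set" where
  "seqs b = {i. \<forall>n. i n < b}"

(* Words in A^q: lists of length q, u ! 0 = u_1. *)
definition words :: "nat \<Rightarrow> nat \<Rightarrow> nat list set" where
  "words b q = {u. length u = q \<and> (\<forall>a\<in>set u. a < b)}"

definition cat :: "nat list \<Rightarrow> (nat \<Rightarrow> nat) \<Rightarrow> (nat \<Rightarrow> nat)" where
  "cat k u = (\<lambda>n. if n < length k then k ! n else u (n - length k))"

(* S(x,i) = sum_{n>=1} gamma^(n-1) psi((x + i_1 + ... + i_n b^(n-1)) / b^n), reindexed n = m+1 *)
definition S :: "nat \<Rightarrow> real \<Rightarrow> (real \<Rightarrow> real) \<Rightarrow> real \<Rightarrow> (nat \<Rightarrow> nat) \<Rightarrow> real" where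
  "S b \<gamma> \<psi> x i = (\<Sum>m. \<gamma> ^ m * \<psi> ((x + (\<Sum>k\<le>m. real (i k) * real b ^ k)) / real b ^ (m + 1)))"

definition S' :: "nat \<Rightarrow> real \<Rightarrow> (real \<Rightarrow> real) \<Rightarrow> real \<Rightarrow> (nat \<Rightarrow> nat) \<Rightarrow> real" where
  "S' b \<gamma> \<psi> x i = deriv (\<lambda>y. S b \<gamma> \<psi> y i) x"

definition xw :: "nat \<Rightarrow> real \<Rightarrow> nat list \<Rightarrow> real" where
  "xw b x u = (x + (\<Sum>j<length u. real (u ! j) * real b ^ j)) / real b ^ length u"

definition tangent :: "nat \<Rightarrow> real \<Rightarrow> (real \<Rightarrow> real) \<Rightarrow> real \<Rightarrow> real \<Rightarrow> real
    \<Rightarrow> (nat \<Rightarrow> nat) \<Rightarrow> (nat \<Rightarrow> nat) \<Rightarrow> bool" where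
  "tangent b \<gamma> \<psi> \<epsilon> \<delta> x0 i j \<longleftrightarrow>
     \<bar>S b \<gamma> \<psi> x0 i - S b \<gamma> \<psi> x0 j\<bar> \<le> \<epsilon> \<and> \<bar>S' b \<gamma> \<psi> x0 i - S' b \<gamma> \<psi> x0 j\<bar> \<le> \<delta>"

definition Eed :: "nat \<Rightarrow> real \<Rightarrow> (real \<Rightarrow> real) \<Rightarrow> nat \<Rightarrow> real \<Rightarrow> real \<Rightarrow> real
    \<Rightarrow> (nat list \<times> nat list) set" where
  "Eed b \<gamma> \<psi> q x0 \<epsilon> \<delta> = {(k, l). k \<in> words b q \<and> l \<in> words b q \<and>
      (\<exists>u\<in>seqs b. \<exists>v\<in>seqs b. tangent b \<gamma> \<psi> \<epsilon> \<delta> x0 (cat k u) (cat l v))}"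

definition E :: "nat \<Rightarrow> real \<Rightarrow> (real \<Rightarrow> real) \<Rightarrow> nat \<Rightarrow> real \<Rightarrow> (nat list \<times> nat list) set" where
  "E b \<gamma> \<psi> q x0 = (\<Inter>\<epsilon>\<in>{0<..}. \<Inter>\<delta>\<in>{0<..}. Eed b \<gamma> \<psi> q x0 \<epsilon> \<delta>)"

abbreviation unitI :: "real measure" where
  "unitI \<equiv> restrict_space lborel {0..<1}"

definition weight :: "(real \<Rightarrow> real) \<Rightarrow> bool" where
  "weight \<omega> \<longleftrightarrow> \<omega> \<in> borel_measurable unitI \<and> (\<forall>x\<in>{0..<1}. \<omega> x > 0) \<and>
     (\<exists>M. \<forall>x\<in>{0..<1}. \<omega> x \<le> M \<and> 1 / \<omega> x \<le> M)"

definition admissible :: "nat \<Rightarrow> real \<Rightarrow> (real \<Rightarrow> real) \<Rightarrow> nat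
    \<Rightarrow> (real \<Rightarrow> nat list \<Rightarrow> nat list \<Rightarrow> real) \<Rightarrow> bool" where
  "admissible b \<gamma> \<psi> q V \<longleftrightarrow>
     (\<forall>u\<in>words b q. \<forall>v\<in>words b q. (\<lambda>x. V x u v) \<in> borel_measurable unitI) \<and>
     (\<forall>x\<in>{0..<1}. \<forall>u\<in>words b q. \<forall>v\<in>words b q. V x u v \<ge> 0) \<and>
     (\<exists>\<epsilon>>0. \<exists>\<delta>>0. \<forall>x\<in>{0..<1}. \<forall>(u, v)\<in>Eed b \<gamma> \<psi> q x \<epsilon> \<delta>. V x u v * V x v u \<ge> 1)"

definition SigmaVw :: "nat \<Rightarrow> nat \<Rightarrow> (real \<Rightarrow> nat list \<Rightarrow> nat list \<Rightarrow> real)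
    \<Rightarrow> (real \<Rightarrow> real) \<Rightarrow> real \<Rightarrow> ereal" where
  "SigmaVw b q V \<omega> x = (SUP u\<in>words b q. ereal (\<omega> x / \<omega> (xw b x u) * (\<Sum>v\<in>words b q. V x u v)))"

definition sigma :: "nat \<Rightarrow> real \<Rightarrow> (real \<Rightarrow> real) \<Rightarrow> nat \<Rightarrow> ereal" where
  "sigma b \<gamma> \<psi> q = (INF (\<omega>, V)\<in>{(\<omega>, V). weight \<omega> \<and> admissible b \<gamma> \<psi> q V}.
      esssup unitI (SigmaVw b q V \<omega>))"

end

theory Submission
  imports Defs
begin

(*
  Since E(q, x) is never all of A^q \<times> A^q, for every x some pair of prefixes (k, l) admits no
  tangent continuations at x.  The pair (S, S') depends on x equicontinuously, uniformly in the
  digit sequence, and S(1, i) = S(0, i + 1) for the odometer i \<mapsto> i + 1, which is onto on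
  prefixes; so a compactness argument on [0, 1] gives one (\<epsilon>, \<delta>) and a step function
  x \<mapsto> (K x, L x) of excluded pairs.  With weight 1, the testing function that vanishes on
  (K, L) and (L, K), equals \<alpha> on the remaining entries of rows K and L, 1 / \<alpha> on the
  remaining entries of columns K and L, and 1 elsewhere, is admissible, and the equation
  defining \<alpha> makes all its row sums equal to b^q - 2 + 2 / \<alpha>.
*)

section \<open>Periodic functions\<close>

lemma periodic_shift_nat:
  fixes f :: "real \<Rightarrow> 'a"
  assumes per: "\<And>x. f (x + 1) = f x"
  shows "f (x + real n) = f x"
proof (induction n)
  case (Suc n)
  have "f (x + real (Suc n)) = f ((x + real n) + 1)" by (simp add: algebra_simps)
  then show ?case using Suc per by simp
qed simp

lemma periodic_shift_int:
  fixes f :: "real \<Rightarrow> 'a"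
  assumes per: "\<And>x. f (x + 1) = f x"
  shows "f (x + of_int n) = f x"
proof (cases "n \<ge> 0")
  case True
  then show ?thesis using periodic_shift_nat[where f=f, OF per, of x "nat n"] by simp
next
  case False
  then have "x = (x + of_int n) + real (nat (- n))" by simp
  then show ?thesis using periodic_shift_nat[where f=f, OF per, of "x + of_int n" "nat (- n)"] by metis
qed

lemma periodic_continuous_bounded:
  fixes f :: "real \<Rightarrow> 'a::metric_space"
  assumes per: "\<And>x. f (x + 1) = f x" and cont: "continuous_on UNIV f"
  shows "bounded (range f)"
proof -
  have "f x = f (frac x)" for x
    using periodic_shift_int[where f=f, OF per, of "frac x" "\<lfloor>x\<rfloor>"] by (simp add: frac_def)
  then have "range f \<subseteq> f ` {0..1}"
    using frac_ge_0 frac_lt_1 by (fastforce intro: less_imp_le)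
  moreover have "compact (f ` {0..1})"
    by (rule compact_continuous_image) (auto intro: continuous_on_subset[OF cont])
  ultimately show ?thesis using bounded_subset compact_imp_bounded by blast
qed

lemma periodic_continuous_uniformly_continuous:
  fixes f :: "real \<Rightarrow> 'a::metric_space"
  assumes per: "\<And>x. f (x + 1) = f x" and cont: "continuous_on UNIV f"
  shows "uniformly_continuous_on UNIV f"
  unfolding uniformly_continuous_on_def
proof (intro allI impI)
  fix e :: real assume "e > 0"
  have "uniformly_continuous_on {0..3} f"
    by (rule compact_uniformly_continuous) (auto intro: continuous_on_subset[OF cont])
  then obtain d where d: "d > 0"
    and close: "\<And>x y. x \<in> {0..3} \<Longrightarrow> y \<in> {0..3} \<Longrightarrow> dist y x < d \<Longrightarrow> dist (f y) (f x) < e"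
    unfolding uniformly_continuous_on_def using \<open>e > 0\<close> by metis
  show "\<exists>d>0. \<forall>x\<in>UNIV. \<forall>y\<in>UNIV. dist y x < d \<longrightarrow> dist (f y) (f x) < e"
  proof (intro exI conjI ballI impI)
    show "min d 1 > 0" using d by simp
    fix x y :: real assume xy: "dist y x < min d 1"
    \<comment> \<open>shift both points into the compact interval [0, 3]\<close>
    define n where "n = 1 - \<lfloor>x\<rfloor>"
    have "x + of_int n \<in> {0..3}" "y + of_int n \<in> {0..3}"
      using xy unfolding n_def dist_real_def by (auto simp: abs_less_iff) linarith+
    then have "dist (f (y + of_int n)) (f (x + of_int n)) < e"
      using close xy by (simp add: dist_real_def)
    then show "dist (f y) (f x) < e" by (simp add: periodic_shift_int[where f=f, OF per])
  qed
qed

section \<open>Digit expansions and the odometer\<close>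

definition prefix_num :: "nat \<Rightarrow> (nat \<Rightarrow> nat) \<Rightarrow> nat \<Rightarrow> nat" where
  "prefix_num b i m = (\<Sum>k\<le>m. i k * b ^ k)"

lemma prefix_num_0 [simp]: "prefix_num b i 0 = i 0"
  by (simp add: prefix_num_def)

lemma prefix_num_Suc [simp]: "prefix_num b i (Suc m) = prefix_num b i m + i (Suc m) * b ^ Suc m"
  by (simp add: prefix_num_def)

lemma prefix_num_cong: "(\<And>k. k \<le> m \<Longrightarrow> i k = j k) \<Longrightarrow> prefix_num b i m = prefix_num b j m"
  unfolding prefix_num_def by (rule sum.cong) auto

lemma prefix_num_less:
  assumes "i \<in> seqs b"
  shows "prefix_num b i m < b ^ (m + 1)"
proof (induction m)
  case 0
  then show ?case using assms by (simp add: seqs_def)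
next
  case (Suc m)
  have "i (Suc m) + 1 \<le> b" using assms by (simp add: seqs_def Suc_le_eq)
  then have "(i (Suc m) + 1) * b ^ Suc m \<le> b * b ^ Suc m" by (rule mult_right_mono) simp
  then show ?case using Suc by (simp add: algebra_simps)
qed

lemma prefix_num_digits:
  assumes step: "\<And>m. A (Suc m) = A m + c m * b ^ Suc m"
  shows "prefix_num b (\<lambda>n. A n div b ^ n mod b) m = A m mod b ^ (m + 1)"
proof (induction m)
  case (Suc m)
  have "A m mod b ^ Suc m = A (Suc m) mod b ^ Suc m" by (simp add: step)
  then have "prefix_num b (\<lambda>n. A n div b ^ n mod b) (Suc m)
      = A (Suc m) mod b ^ Suc m + A (Suc m) div b ^ Suc m mod b * b ^ Suc m"
    using Suc by simp
  also have "\<dots> = A (Suc m) mod (b ^ Suc m * b)" by (simp add: mod_mult2_eq)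
  finally show ?case by (simp add: mult.commute)
qed simp

lemma prefix_num_inj:
  assumes "b > 0" and "\<And>m. prefix_num b i m = prefix_num b j m"
  shows "i = j"
proof
  fix n
  show "i n = j n"
    using assms(2)[of n] assms(2)[of "n - 1"] \<open>b > 0\<close> by (cases n) simp_all
qed

text \<open>Adding 1 to a digit sequence (least significant digit first), with carry.\<close>

definition odometer :: "nat \<Rightarrow> (nat \<Rightarrow> nat) \<Rightarrow> nat \<Rightarrow> nat" where
  "odometer b i = (\<lambda>n. (1 + prefix_num b i n) div b ^ n mod b)"

definition predecessor :: "nat \<Rightarrow> (nat \<Rightarrow> nat) \<Rightarrow> nat \<Rightarrow> nat" where
  "predecessor b i = (\<lambda>n. (prefix_num b i n + (b ^ (n + 1) - 1)) div b ^ n mod b)"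

lemma odometer_in_seqs: "b > 0 \<Longrightarrow> odometer b i \<in> seqs b"
  by (simp add: odometer_def seqs_def)

lemma predecessor_in_seqs: "b > 0 \<Longrightarrow> predecessor b i \<in> seqs b"
  by (simp add: predecessor_def seqs_def)

lemma prefix_num_odometer:
  assumes "b > 0"
  shows "prefix_num b (odometer b i) m = (1 + prefix_num b i m) mod b ^ (m + 1)"
  unfolding odometer_def by (rule prefix_num_digits[where c="\<lambda>m. i (Suc m)"]) simp

lemma prefix_num_predecessor:
  assumes "b > 0"
  shows "prefix_num b (predecessor b i) m = (prefix_num b i m + (b ^ (m + 1) - 1)) mod b ^ (m + 1)"
  unfolding predecessor_def
proof (rule prefix_num_digits[where c="\<lambda>m. i (Suc m) + (b - 1)"])
  fix m
  define B where "B = b ^ Suc m"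
  have "B \<ge> 1" using assms by (simp add: B_def)
  moreover have "(b - 1) * B + B = b * B" using assms by (cases b) auto
  ultimately have "b * B - 1 = (B - 1) + (b - 1) * B" by linarith
  moreover have "b ^ (Suc m + 1) = b * B" "b ^ (m + 1) = B" by (simp_all add: B_def)
  ultimately show "prefix_num b i (Suc m) + (b ^ (Suc m + 1) - 1)
      = prefix_num b i m + (b ^ (m + 1) - 1) + (i (Suc m) + (b - 1)) * b ^ Suc m"
    unfolding prefix_num_Suc B_def[symmetric] add_mult_distrib by linarith
qed

lemma odometer_predecessor:
  assumes b: "b > 0" and i: "i \<in> seqs b"
  shows "odometer b (predecessor b i) = i"
proof (rule prefix_num_inj[OF b])
  fix m
  have "b ^ (m + 1) \<ge> 1" using b by simp
  have "prefix_num b (odometer b (predecessor b i)) m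
      = (1 + (prefix_num b i m + (b ^ (m + 1) - 1)) mod b ^ (m + 1)) mod b ^ (m + 1)"
    using b by (simp only: prefix_num_odometer prefix_num_predecessor)
  also have "\<dots> = (1 + (prefix_num b i m + (b ^ (m + 1) - 1))) mod b ^ (m + 1)"
    by (rule mod_add_right_eq)
  also have "1 + (prefix_num b i m + (b ^ (m + 1) - 1)) = prefix_num b i m + b ^ (m + 1)"
    using \<open>b ^ (m + 1) \<ge> 1\<close> by simp
  also have "(prefix_num b i m + b ^ (m + 1)) mod b ^ (m + 1) = prefix_num b i m"
    using prefix_num_less[OF i, of m] by (simp only: mod_add_self2 mod_less)
  finally show "prefix_num b (odometer b (predecessor b i)) m = prefix_num b i m" .
qed

lemma odometer_cong: "(\<And>k. k \<le> n \<Longrightarrow> i k = j k) \<Longrightarrow> odometer b i n = odometer b j n"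
  unfolding odometer_def using prefix_num_cong[of n i j b] by simp

lemma odometer_prefix_surj:
  assumes b: "b > 0" and k': "k' \<in> words b q"
  obtains k where "k \<in> words b q" "\<And>u. u \<in> seqs b \<Longrightarrow> \<exists>u'\<in>seqs b. odometer b (cat k u) = cat k' u'"
proof
  define i where "i = predecessor b (cat k' (\<lambda>_. 0))"
  have lk': "length k' = q" using k' by (simp add: words_def)
  have "cat k' (\<lambda>_. 0) \<in> seqs b" using k' b by (auto simp: cat_def seqs_def words_def)
  then have odo_i: "odometer b i = cat k' (\<lambda>_. 0)" unfolding i_def by (rule odometer_predecessor[OF b])
  show "map i [0..<q] \<in> words b q"
    using predecessor_in_seqs[OF b] by (auto simp: i_def words_def seqs_def)
  fix u assume u: "u \<in> seqs b"
  \<comment> \<open>the first q output digits of the odometer only depend on the first q input digits\<close>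
  have "odometer b (cat (map i [0..<q]) u) n = k' ! n" if "n < q" for n
  proof -
    have "odometer b (cat (map i [0..<q]) u) n = odometer b i n"
      by (rule odometer_cong) (use that in \<open>simp add: cat_def\<close>)
    then show ?thesis using that lk' by (simp add: odo_i cat_def)
  qed
  then have "odometer b (cat (map i [0..<q]) u) = cat k' (\<lambda>n. odometer b (cat (map i [0..<q]) u) (n + q))"
    by (auto simp: cat_def lk')
  moreover have "(\<lambda>n. odometer b (cat (map i [0..<q]) u) (n + q)) \<in> seqs b"
    using odometer_in_seqs[OF b] by (auto simp: seqs_def)
  ultimately show "\<exists>u'\<in>seqs b. odometer b (cat (map i [0..<q]) u) = cat k' u'" by blast
qed

text \<open>The point x(i_1 \<dots> i_{m+1}) at which the m-th term of S(x, i) evaluates \<psi>.\<close>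

definition digit_point :: "nat \<Rightarrow> real \<Rightarrow> (nat \<Rightarrow> nat) \<Rightarrow> nat \<Rightarrow> real" where
  "digit_point b x i m = (x + real (prefix_num b i m)) / real b ^ (m + 1)"

lemma digit_point_dist:
  assumes "b > 0"
  shows "\<bar>digit_point b x i m - digit_point b y i m\<bar> \<le> \<bar>x - y\<bar>"
proof -
  have "real b ^ (m + 1) \<ge> 1" by (rule one_le_power) (use assms in simp)
  then have "\<bar>x - y\<bar> / real b ^ (m + 1) \<le> \<bar>x - y\<bar> / 1" by (intro divide_left_mono) auto
  then show ?thesis by (simp add: digit_point_def diff_divide_distrib[symmetric])
qed

lemma digit_point_one:
  assumes "b > 0"
  shows "digit_point b 1 i m
     = digit_point b 0 (odometer b i) m + of_int (int ((1 + prefix_num b i m) div b ^ (m + 1)))"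
proof -
  define P where "P = b ^ (m + 1)"
  have "P > 0" using assms by (simp add: P_def)
  have "1 + prefix_num b i m = (1 + prefix_num b i m) div P * P + (1 + prefix_num b i m) mod P"
    by (simp only: div_mult_mod_eq)
  then have "1 + prefix_num b i m = (1 + prefix_num b i m) div P * P + prefix_num b (odometer b i) m"
    using prefix_num_odometer[OF assms, of i m] by (simp only: P_def)
  then have "1 + real (prefix_num b i m)
      = real ((1 + prefix_num b i m) div P) * real P + real (prefix_num b (odometer b i) m)"
    by (metis of_nat_1 of_nat_add of_nat_mult)
  then show ?thesis using \<open>P > 0\<close> by (simp add: digit_point_def P_def field_simps)
qed

lemma summable_geometric_bound:
  fixes f :: "nat \<Rightarrow> real"
  assumes "\<And>m. \<bar>f m\<bar> \<le> C * \<gamma> ^ m" "0 \<le> \<gamma>" "\<gamma> < 1"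
  shows "summable f" "\<bar>suminf f\<bar> \<le> C / (1 - \<gamma>)"
proof -
  have geo: "(\<lambda>m. C * \<gamma> ^ m) sums (C / (1 - \<gamma>))"
    using sums_mult[OF geometric_sums, of \<gamma> C] assms by simp
  show "summable f"
    using summable_comparison_test'[OF sums_summable[OF geo], of 0 f] assms(1) by simp
  show "\<bar>suminf f\<bar> \<le> C / (1 - \<gamma>)"
    using norm_suminf_le[of f "\<lambda>m. C * \<gamma> ^ m"] assms(1) geo by (simp add: sums_iff)
qed

section \<open>The series S and its derivative\<close>

locale digit_series =
  fixes b :: nat and \<gamma> :: real and \<psi> \<psi>' :: "real \<Rightarrow> real"
  assumes b_pos: "b > 0"
    and gamma_nonneg: "0 \<le> \<gamma>" and gamma_less_1: "\<gamma> < 1"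
    and psi_periodic: "\<And>x. \<psi> (x + 1) = \<psi> x"
    and psi_deriv: "\<And>x. (\<psi> has_real_derivative \<psi>' x) (at x)"
    and psi'_cont: "continuous_on UNIV \<psi>'"
begin

lemma psi'_periodic: "\<psi>' (x + 1) = \<psi>' x"
proof -
  have "((\<lambda>y. \<psi> (y + 1)) has_real_derivative \<psi>' (x + 1)) (at x)"
    using psi_deriv DERIV_shift by blast
  then have "(\<psi> has_real_derivative \<psi>' (x + 1)) (at x)" by (simp add: psi_periodic)
  then show ?thesis using psi_deriv DERIV_unique by blast
qed

lemma psi_cont: "continuous_on UNIV \<psi>"
  by (rule continuous_at_imp_continuous_on) (use psi_deriv DERIV_isCont in blast)

definition dseries :: "(real \<Rightarrow> real) \<Rightarrow> (nat \<Rightarrow> real) \<Rightarrow> real \<Rightarrow> (nat \<Rightarrow> nat) \<Rightarrow> real" where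
  "dseries f c x i = (\<Sum>m. \<gamma> ^ m * (c m * f (digit_point b x i m)))"

lemma dseries_term_bound:
  assumes "\<And>y. \<bar>f y\<bar> \<le> B" "\<And>m. \<bar>c m\<bar> \<le> 1"
  shows "\<bar>\<gamma> ^ m * (c m * f y)\<bar> \<le> B * \<gamma> ^ m"
proof -
  have "\<bar>c m * f y\<bar> \<le> 1 * B"
    unfolding abs_mult using assms by (intro mult_mono) auto
  then have "\<gamma> ^ m * \<bar>c m * f y\<bar> \<le> \<gamma> ^ m * B" using gamma_nonneg by (intro mult_left_mono) auto
  then show ?thesis using gamma_nonneg by (simp add: abs_mult mult_ac)
qed

lemma summable_dseries:
  assumes "bounded (range f)" "\<And>m. \<bar>c m\<bar> \<le> 1"
  shows "summable (\<lambda>m. \<gamma> ^ m * (c m * f (a m)))"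
proof -
  obtain B where B: "\<And>y. \<bar>f y\<bar> \<le> B" using assms(1) by (auto simp: bounded_iff)
  show ?thesis
    by (rule summable_geometric_bound(1)[OF dseries_term_bound[OF B assms(2)] gamma_nonneg gamma_less_1])
qed

lemma dseries_equicont:
  assumes uc: "uniformly_continuous_on UNIV f" and bd: "bounded (range f)"
    and c: "\<And>m. \<bar>c m\<bar> \<le> 1" and "\<eta> > 0"
  obtains d where "d > 0" "\<And>x y i. \<bar>x - y\<bar> < d \<Longrightarrow> \<bar>dseries f c x i - dseries f c y i\<bar> \<le> \<eta>"
proof -
  define e where "e = \<eta> * (1 - \<gamma>)"
  have "e > 0" using \<open>\<eta> > 0\<close> gamma_less_1 by (simp add: e_def)
  then obtain d where "d > 0" and d: "\<And>x y. dist y x < d \<Longrightarrow> dist (f y) (f x) < e"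
    using uc unfolding uniformly_continuous_on_def by blast
  have "\<bar>dseries f c x i - dseries f c y i\<bar> \<le> \<eta>" if xy: "\<bar>x - y\<bar> < d" for x y i
  proof -
    define g where "g z m = \<gamma> ^ m * (c m * f (digit_point b z i m))" for z m
    have bound: "\<bar>g x m - g y m\<bar> \<le> e * \<gamma> ^ m" for m
    proof -
      have "\<bar>digit_point b x i m - digit_point b y i m\<bar> < d"
        using digit_point_dist[OF b_pos] xy by (rule le_less_trans)
      then have "\<bar>f (digit_point b x i m) - f (digit_point b y i m)\<bar> \<le> e"
        using d by (simp add: dist_real_def abs_minus_commute less_imp_le)
      then show ?thesis
        using dseries_term_bound[of "\<lambda>z. f (digit_point b x i m) - f (digit_point b y i m)" e c m 0] c
        by (simp add: g_def algebra_simps)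
    qed
    have "\<bar>(\<Sum>m. g x m - g y m)\<bar> \<le> e / (1 - \<gamma>)"
      by (rule summable_geometric_bound(2)[OF bound gamma_nonneg gamma_less_1])
    moreover have "(\<Sum>m. g x m - g y m) = dseries f c x i - dseries f c y i"
      unfolding g_def dseries_def by (rule suminf_diff[symmetric]; rule summable_dseries[OF bd c])
    ultimately show ?thesis using gamma_less_1 by (simp add: e_def)
  qed
  then show ?thesis using \<open>d > 0\<close> that by blast
qed

lemma dseries_at_one:
  assumes "\<And>x. f (x + 1) = f x"
  shows "dseries f c 1 i = dseries f c 0 (odometer b i)"
  unfolding dseries_def digit_point_one[OF b_pos] periodic_shift_int[where f=f, OF assms] ..

lemma S_eq_dseries: "S b \<gamma> \<psi> x i = dseries \<psi> (\<lambda>_. 1) x i"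
  by (simp add: S_def dseries_def digit_point_def prefix_num_def)

lemma deriv_weight_le_1: "\<bar>1 / real b ^ (m + 1)\<bar> \<le> 1"
proof -
  have "real b ^ (m + 1) \<ge> 1" by (rule one_le_power) (use b_pos in simp)
  then show ?thesis by simp
qed

lemma S_has_derivative:
  "((\<lambda>y. S b \<gamma> \<psi> y i) has_real_derivative dseries \<psi>' (\<lambda>m. 1 / real b ^ (m + 1)) x i) (at x)"
proof -
  obtain B' where B': "\<And>y. \<bar>\<psi>' y\<bar> \<le> B'"
    using periodic_continuous_bounded[OF psi'_periodic psi'_cont] by (auto simp: bounded_iff)
  define f where "f = (\<lambda>m y. \<gamma> ^ m * (1 * \<psi> (digit_point b y i m)))"
  define f' where "f' = (\<lambda>m y. \<gamma> ^ m * (1 / real b ^ (m + 1) * \<psi>' (digit_point b y i m)))"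
  have "(f m has_field_derivative f' m y) (at y within UNIV)" for m y
  proof -
    have "((\<lambda>y. (y + real (prefix_num b i m)) / real b ^ (m + 1)) has_real_derivative 1 / real b ^ (m + 1)) (at y)"
      using b_pos by (auto intro!: derivative_eq_intros)
    then have "((\<lambda>y. \<psi> (digit_point b y i m)) has_real_derivative
        \<psi>' (digit_point b y i m) * (1 / real b ^ (m + 1))) (at y)"
      unfolding digit_point_def by (rule DERIV_chain2[OF psi_deriv])
    from DERIV_cmult[OF this, where c="\<gamma> ^ m"] show ?thesis by (simp add: f_def f'_def mult_ac)
  qed
  moreover have "uniformly_convergent_on UNIV (\<lambda>n y. \<Sum>m<n. f' m y)"
    by (rule Weierstrass_m_test'[where M="\<lambda>m. B' * \<gamma> ^ m"])
      (use dseries_term_bound[where c="\<lambda>m. 1 / real b ^ (m + 1)", OF B' deriv_weight_le_1] gamma_nonneg gamma_less_1 in \<open>auto simp: f'_def\<close>)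
  moreover have "summable (\<lambda>m. f m 0)"
    unfolding f_def by (rule summable_dseries[OF periodic_continuous_bounded[OF psi_periodic psi_cont]]) simp
  ultimately have "((\<lambda>y. \<Sum>m. f m y) has_field_derivative (\<Sum>m. f' m x)) (at x)"
    by (intro has_field_derivative_series'(2)[OF convex_UNIV]) auto
  then show ?thesis by (simp add: S_eq_dseries dseries_def f_def f'_def)
qed

lemma S'_eq_dseries: "S' b \<gamma> \<psi> x i = dseries \<psi>' (\<lambda>m. 1 / real b ^ (m + 1)) x i"
  unfolding S'_def by (rule DERIV_imp_deriv[OF S_has_derivative])

lemma S_S'_equicont:
  assumes "\<eta> > 0"
  obtains d where "d > 0" "\<And>x y i. \<bar>x - y\<bar> < d \<Longrightarrow>
    \<bar>S b \<gamma> \<psi> x i - S b \<gamma> \<psi> y i\<bar> \<le> \<eta> \<and> \<bar>S' b \<gamma> \<psi> x i - S' b \<gamma> \<psi> y i\<bar> \<le> \<eta>"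
proof -
  obtain d1 where "d1 > 0" and d1: "\<And>x y i. \<bar>x - y\<bar> < d1 \<Longrightarrow>
      \<bar>dseries \<psi> (\<lambda>_. 1) x i - dseries \<psi> (\<lambda>_. 1) y i\<bar> \<le> \<eta>"
    by (rule dseries_equicont[where c="\<lambda>_. 1", OF periodic_continuous_uniformly_continuous[OF psi_periodic psi_cont]
        periodic_continuous_bounded[OF psi_periodic psi_cont] _ assms]) auto
  obtain d2 where "d2 > 0" and d2: "\<And>x y i. \<bar>x - y\<bar> < d2 \<Longrightarrow>
      \<bar>dseries \<psi>' (\<lambda>m. 1 / real b ^ (m + 1)) x i - dseries \<psi>' (\<lambda>m. 1 / real b ^ (m + 1)) y i\<bar> \<le> \<eta>"
    by (rule dseries_equicont[OF periodic_continuous_uniformly_continuous[OF psi'_periodic psi'_cont]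
        periodic_continuous_bounded[OF psi'_periodic psi'_cont] _ assms]) (use deriv_weight_le_1 in auto)
  show ?thesis
  proof (rule that[of "min d1 d2"])
    show "min d1 d2 > 0" using \<open>d1 > 0\<close> \<open>d2 > 0\<close> by simp
    fix x y i assume "\<bar>x - y\<bar> < min d1 d2"
    then show "\<bar>S b \<gamma> \<psi> x i - S b \<gamma> \<psi> y i\<bar> \<le> \<eta> \<and> \<bar>S' b \<gamma> \<psi> x i - S' b \<gamma> \<psi> y i\<bar> \<le> \<eta>"
      using d1[of x y i] d2[of x y i] by (simp add: S_eq_dseries S'_eq_dseries)
  qed
qed

lemma S_at_one: "S b \<gamma> \<psi> 1 i = S b \<gamma> \<psi> 0 (odometer b i)"
  unfolding S_eq_dseries using dseries_at_one[where f=\<psi>, OF psi_periodic] .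

lemma S'_at_one: "S' b \<gamma> \<psi> 1 i = S' b \<gamma> \<psi> 0 (odometer b i)"
  unfolding S'_eq_dseries using dseries_at_one[where f=\<psi>', OF psi'_periodic] .

end

section \<open>Pairs of prefixes without tangent continuations\<close>

lemma Eed_subset_words: "Eed b \<gamma> \<psi> q x \<epsilon> \<delta> \<subseteq> words b q \<times> words b q"
  by (auto simp: Eed_def)

lemma Eed_mono:
  assumes "\<epsilon> \<le> \<epsilon>'" "\<delta> \<le> \<delta>'"
  shows "Eed b \<gamma> \<psi> q x \<epsilon> \<delta> \<subseteq> Eed b \<gamma> \<psi> q x \<epsilon>' \<delta>'"
proof
  fix p assume "p \<in> Eed b \<gamma> \<psi> q x \<epsilon> \<delta>"
  then obtain k l u v where "p = (k, l)" "k \<in> words b q" "l \<in> words b q" "u \<in> seqs b" "v \<in> seqs b"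
    "tangent b \<gamma> \<psi> \<epsilon> \<delta> x (cat k u) (cat l v)"
    by (auto simp: Eed_def)
  moreover from this(6) have "tangent b \<gamma> \<psi> \<epsilon>' \<delta>' x (cat k u) (cat l v)"
    using assms by (auto simp: tangent_def)
  ultimately show "p \<in> Eed b \<gamma> \<psi> q x \<epsilon>' \<delta>'" by (auto simp: Eed_def)
qed

lemma Eed_swap: "(k, l) \<in> Eed b \<gamma> \<psi> q x \<epsilon> \<delta> \<longleftrightarrow> (l, k) \<in> Eed b \<gamma> \<psi> q x \<epsilon> \<delta>"
  by (auto simp: Eed_def tangent_def abs_minus_commute)

lemma Eed_diag:
  assumes "b > 0" "k \<in> words b q" "\<epsilon> \<ge> 0" "\<delta> \<ge> 0"
  shows "(k, k) \<in> Eed b \<gamma> \<psi> q x \<epsilon> \<delta>"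
proof -
  have "(\<lambda>_. 0) \<in> seqs b" using assms by (simp add: seqs_def)
  then show ?thesis using assms unfolding Eed_def tangent_def by (auto intro!: bexI[of _ "\<lambda>_. 0"])
qed

lemma E_eq_words_iff:
  "E b \<gamma> \<psi> q x = words b q \<times> words b q \<longleftrightarrow>
     (\<forall>\<epsilon>>0. \<forall>\<delta>>0. words b q \<times> words b q \<subseteq> Eed b \<gamma> \<psi> q x \<epsilon> \<delta>)"
proof -
  have "E b \<gamma> \<psi> q x \<subseteq> Eed b \<gamma> \<psi> q x 1 1" by (auto simp: E_def)
  then have "E b \<gamma> \<psi> q x \<subseteq> words b q \<times> words b q" using Eed_subset_words by blast
  then show ?thesis by (auto simp: E_def; blast)
qed

lemma floor_grid:
  assumes "x \<in> {0..<1}" "N > 0"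
  shows "nat \<lfloor>x * real N\<rfloor> < N" "\<bar>x - real (nat \<lfloor>x * real N\<rfloor>) / real N\<bar> < 1 / real N"
proof -
  have "0 \<le> x * real N" "x * real N < real N" using assms by auto
  then have j: "real (nat \<lfloor>x * real N\<rfloor>) \<le> x * real N" "x * real N < real (nat \<lfloor>x * real N\<rfloor>) + 1"
    by linarith+
  then show "nat \<lfloor>x * real N\<rfloor> < N" using \<open>x * real N < real N\<close> by linarith
  have "\<bar>x * real N - real (nat \<lfloor>x * real N\<rfloor>)\<bar> < 1" using j by linarith
  then show "\<bar>x - real (nat \<lfloor>x * real N\<rfloor>) / real N\<bar> < 1 / real N"
    using assms(2) by (simp add: field_simps abs_divide[symmetric] pos_divide_less_eq)
qed

context digit_series
begin

lemma Eed_perturb: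
  assumes "\<eta> > 0"
  obtains d where "d > 0"
    "\<And>x y \<epsilon> \<delta>. \<bar>x - y\<bar> < d \<Longrightarrow> Eed b \<gamma> \<psi> q x \<epsilon> \<delta> \<subseteq> Eed b \<gamma> \<psi> q y (\<epsilon> + \<eta>) (\<delta> + \<eta>)"
proof -
  obtain d where "d > 0" and d: "\<And>x y i. \<bar>x - y\<bar> < d \<Longrightarrow>
      \<bar>S b \<gamma> \<psi> x i - S b \<gamma> \<psi> y i\<bar> \<le> \<eta> / 2 \<and> \<bar>S' b \<gamma> \<psi> x i - S' b \<gamma> \<psi> y i\<bar> \<le> \<eta> / 2"
    using S_S'_equicont[of "\<eta> / 2"] assms by auto
  have "tangent b \<gamma> \<psi> (\<epsilon> + \<eta>) (\<delta> + \<eta>) y i j"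
    if "\<bar>x - y\<bar> < d" "tangent b \<gamma> \<psi> \<epsilon> \<delta> x i j" for x y \<epsilon> \<delta> i j
    using d[OF that(1), of i] d[OF that(1), of j] that(2) unfolding tangent_def by linarith
  then have "Eed b \<gamma> \<psi> q x \<epsilon> \<delta> \<subseteq> Eed b \<gamma> \<psi> q y (\<epsilon> + \<eta>) (\<delta> + \<eta>)"
    if "\<bar>x - y\<bar> < d" for x y \<epsilon> \<delta>
    using that unfolding Eed_def by blast
  then show ?thesis using that \<open>d > 0\<close> by blast
qed

lemma E_full_at_limit:
  assumes X: "X \<longlonglongrightarrow> x" and e: "e \<longlonglongrightarrow> 0"
    and full: "\<And>n. words b q \<times> words b q \<subseteq> Eed b \<gamma> \<psi> q (X n) (e n) (e n)"
  shows "E b \<gamma> \<psi> q x = words b q \<times> words b q"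
  unfolding E_eq_words_iff
proof (intro allI impI)
  fix \<epsilon> \<delta> :: real assume "\<epsilon> > 0" "\<delta> > 0"
  define \<eta> where "\<eta> = min \<epsilon> \<delta> / 2"
  have "\<eta> > 0" using \<open>\<epsilon> > 0\<close> \<open>\<delta> > 0\<close> by (simp add: \<eta>_def)
  obtain d where "d > 0" and d: "\<And>x y \<epsilon> \<delta>. \<bar>x - y\<bar> < d \<Longrightarrow>
      Eed b \<gamma> \<psi> q x \<epsilon> \<delta> \<subseteq> Eed b \<gamma> \<psi> q y (\<epsilon> + \<eta>) (\<delta> + \<eta>)"
    using Eed_perturb[OF \<open>\<eta> > 0\<close>] by blast
  have "eventually (\<lambda>n. \<bar>X n - x\<bar> < d) sequentially"
    using tendstoD[OF X \<open>d > 0\<close>] by (simp add: dist_real_def)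
  moreover have "eventually (\<lambda>n. e n < \<eta>) sequentially"
    using order_tendstoD(2)[OF e \<open>\<eta> > 0\<close>] .
  ultimately obtain n where n: "\<bar>X n - x\<bar> < d" "e n < \<eta>"
    using eventually_happens'[OF trivial_limit_sequentially] eventually_conj by blast
  have "words b q \<times> words b q \<subseteq> Eed b \<gamma> \<psi> q (X n) (e n) (e n)" by (rule full)
  also have "\<dots> \<subseteq> Eed b \<gamma> \<psi> q x (e n + \<eta>) (e n + \<eta>)" by (rule d[OF n(1)])
  also have "\<dots> \<subseteq> Eed b \<gamma> \<psi> q x \<epsilon> \<delta>" by (rule Eed_mono) (use n(2) in \<open>auto simp: \<eta>_def\<close>)
  finally show "words b q \<times> words b q \<subseteq> Eed b \<gamma> \<psi> q x \<epsilon> \<delta>" .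
qed

lemma Eed_full_at_one:
  assumes "words b q \<times> words b q \<subseteq> Eed b \<gamma> \<psi> q 1 \<epsilon> \<delta>"
  shows "words b q \<times> words b q \<subseteq> Eed b \<gamma> \<psi> q 0 \<epsilon> \<delta>"
proof clarify
  fix k' l' assume "k' \<in> words b q" "l' \<in> words b q"
  obtain k where k: "k \<in> words b q" "\<And>u. u \<in> seqs b \<Longrightarrow> \<exists>u'\<in>seqs b. odometer b (cat k u) = cat k' u'"
    using odometer_prefix_surj[OF b_pos \<open>k' \<in> words b q\<close>] by blast
  obtain l where l: "l \<in> words b q" "\<And>v. v \<in> seqs b \<Longrightarrow> \<exists>v'\<in>seqs b. odometer b (cat l v) = cat l' v'"
    using odometer_prefix_surj[OF b_pos \<open>l' \<in> words b q\<close>] by blast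
  obtain u v where "u \<in> seqs b" "v \<in> seqs b" and tan: "tangent b \<gamma> \<psi> \<epsilon> \<delta> 1 (cat k u) (cat l v)"
    using assms k(1) l(1) by (auto simp: Eed_def)
  then obtain u' v' where "u' \<in> seqs b" "v' \<in> seqs b"
    and "odometer b (cat k u) = cat k' u'" "odometer b (cat l v) = cat l' v'"
    using k(2) l(2) by metis
  moreover have "tangent b \<gamma> \<psi> \<epsilon> \<delta> 0 (odometer b (cat k u)) (odometer b (cat l v))"
    using tan by (simp add: tangent_def S_at_one S'_at_one)
  ultimately show "(k', l') \<in> Eed b \<gamma> \<psi> q 0 \<epsilon> \<delta>"
    using \<open>k' \<in> words b q\<close> \<open>l' \<in> words b q\<close> by (auto simp: Eed_def)
qed

text \<open>Compactness of [0, 1]: the exclusion can be witnessed with \<epsilon>, \<delta> independent of x.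
  A limit point 1 is reduced to the point 0 by the odometer.\<close>

lemma uniform_exclusion:
  assumes E: "\<forall>x\<in>{0..<1}. E b \<gamma> \<psi> q x \<noteq> words b q \<times> words b q"
  obtains \<epsilon> \<delta> where "\<epsilon> > 0" "\<delta> > 0"
    "\<And>x. x \<in> {0..<1} \<Longrightarrow> \<not> words b q \<times> words b q \<subseteq> Eed b \<gamma> \<psi> q x \<epsilon> \<delta>"
proof (rule ccontr)
  let ?W = "words b q \<times> words b q"
  assume "\<not> thesis"
  then have "\<forall>n. \<exists>x\<in>{0..<1}. ?W \<subseteq> Eed b \<gamma> \<psi> q x (inverse (Suc n)) (inverse (Suc n))"
    using that by (meson inverse_positive_iff_positive of_nat_0_less_iff zero_less_Suc)
  then obtain X where X: "\<And>n. X n \<in> {0..<1}"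
    "\<And>n. ?W \<subseteq> Eed b \<gamma> \<psi> q (X n) (inverse (Suc n)) (inverse (Suc n))"
    by metis
  have "seq_compact {0..1::real}" by (simp add: compact_imp_seq_compact)
  then obtain x r where x: "x \<in> {0..1}" and r: "strict_mono r" "(X \<circ> r) \<longlonglongrightarrow> x"
    unfolding seq_compact_def using X(1) by (metis atLeastLessThan_iff atLeastAtMost_iff less_imp_le)
  have full: "E b \<gamma> \<psi> q x = ?W"
    by (rule E_full_at_limit[OF r(2) LIMSEQ_subseq_LIMSEQ[OF LIMSEQ_inverse_real_of_nat r(1)]])
      (simp only: comp_apply X(2))
  show False
  proof (cases "x < 1")
    case True
    then show False using E x full by auto
  next
    case False
    then have "x = 1" using x by simp
    then have "E b \<gamma> \<psi> q 0 = ?W"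
      using full Eed_full_at_one unfolding E_eq_words_iff by blast
    then show False using E by auto
  qed
qed

lemma excluded_pair_step_selection:
  assumes E: "\<forall>x\<in>{0..<1}. E b \<gamma> \<psi> q x \<noteq> words b q \<times> words b q"
  obtains \<epsilon> \<delta> and P :: "real \<Rightarrow> nat list \<times> nat list"
  where "\<epsilon> > 0" "\<delta> > 0" "P \<in> borel \<rightarrow>\<^sub>M count_space UNIV"
    "\<And>x. x \<in> {0..<1} \<Longrightarrow> P x \<in> words b q \<times> words b q - Eed b \<gamma> \<psi> q x \<epsilon> \<delta>"
proof -
  let ?W = "words b q \<times> words b q"
  obtain \<epsilon> \<delta> where "\<epsilon> > 0" "\<delta> > 0"
    and excl: "\<And>x. x \<in> {0..<1} \<Longrightarrow> \<not> ?W \<subseteq> Eed b \<gamma> \<psi> q x \<epsilon> \<delta>"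
    using uniform_exclusion[OF E] by blast
  define \<eta> where "\<eta> = min \<epsilon> \<delta> / 2"
  have "\<eta> > 0" using \<open>\<epsilon> > 0\<close> \<open>\<delta> > 0\<close> by (simp add: \<eta>_def)
  obtain d where "d > 0" and d: "\<And>x y \<epsilon> \<delta>. \<bar>x - y\<bar> < d \<Longrightarrow>
      Eed b \<gamma> \<psi> q x \<epsilon> \<delta> \<subseteq> Eed b \<gamma> \<psi> q y (\<epsilon> + \<eta>) (\<delta> + \<eta>)"
    using Eed_perturb[OF \<open>\<eta> > 0\<close>] by blast
  obtain n where n: "inverse (real (Suc n)) < d" using reals_Archimedean[OF \<open>d > 0\<close>] by blast
  define N where "N = Suc n"
  \<comment> \<open>an excluded pair at each grid point j / N, used on the cell [j / N, (j + 1) / N)\<close>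
  obtain Q where Q: "\<And>j. j < N \<Longrightarrow> Q j \<in> ?W - Eed b \<gamma> \<psi> q (real j / real N) \<epsilon> \<delta>"
  proof -
    have "\<exists>p. j < N \<longrightarrow> p \<in> ?W - Eed b \<gamma> \<psi> q (real j / real N) \<epsilon> \<delta>" for j
    proof (cases "j < N")
      case True
      then have "real j / real N \<in> {0..<1}" by (auto simp: N_def divide_simps)
      then show ?thesis using excl by blast
    qed simp
    then show ?thesis using that by metis
  qed
  define P where "P x = Q (nat \<lfloor>x * real N\<rfloor>)" for x
  have "P \<in> borel \<rightarrow>\<^sub>M count_space UNIV"
    unfolding P_def
    by (rule measurable_compose[OF measurable_compose[OF _ measurable_real_floor]]) auto
  moreover have "P x \<in> ?W - Eed b \<gamma> \<psi> q x (\<epsilon> / 2) (\<delta> / 2)" if "x \<in> {0..<1}" for x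
  proof -
    let ?j = "nat \<lfloor>x * real N\<rfloor>"
    have "?j < N" "\<bar>x - real ?j / real N\<bar> < d"
      using floor_grid[OF that, of N] n by (auto simp: N_def inverse_eq_divide)
    have "Eed b \<gamma> \<psi> q x (\<epsilon> / 2) (\<delta> / 2) \<subseteq> Eed b \<gamma> \<psi> q (real ?j / real N) (\<epsilon> / 2 + \<eta>) (\<delta> / 2 + \<eta>)"
      by (rule d) fact
    also have "\<dots> \<subseteq> Eed b \<gamma> \<psi> q (real ?j / real N) \<epsilon> \<delta>"
      by (rule Eed_mono) (auto simp: \<eta>_def)
    finally show ?thesis using Q[OF \<open>?j < N\<close>] by (auto simp: P_def)
  qed
  ultimately show ?thesis using that[of "\<epsilon> / 2" "\<delta> / 2" P] \<open>\<epsilon> > 0\<close> \<open>\<delta> > 0\<close> by auto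
qed

end

section \<open>The testing function\<close>

lemma words_eq_lists: "words b q = {xs. set xs \<subseteq> {..<b} \<and> length xs = q}"
  by (auto simp: words_def)

lemma finite_words: "finite (words b q)"
  unfolding words_eq_lists by (rule finite_lists_length_eq) simp

lemma card_words: "card (words b q) = b ^ q"
  unfolding words_eq_lists by (subst card_lists_length_eq) simp_all

definition test_fn :: "real \<Rightarrow> 'a \<Rightarrow> 'a \<Rightarrow> 'a \<Rightarrow> 'a \<Rightarrow> real" where
  "test_fn \<alpha> k l u v =
     (if u = v then 1
      else if (u = k \<and> v = l) \<or> (u = l \<and> v = k) then 0
      else if v = k \<or> v = l then 1 / \<alpha>
      else if u = k \<or> u = l then \<alpha>
      else 1)"

lemma test_fn_nonneg: "\<alpha> > 0 \<Longrightarrow> test_fn \<alpha> k l u v \<ge> 0"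
  by (simp add: test_fn_def)

lemma test_fn_mult_ge_1:
  assumes "\<alpha> > 0" "\<not> ((u = k \<and> v = l) \<or> (u = l \<and> v = k))"
  shows "test_fn \<alpha> k l u v * test_fn \<alpha> k l v u \<ge> 1"
  using assms by (auto simp: test_fn_def)

text \<open>Rows k and l sum to 1 + (n - 2) \<alpha>, all other rows to n - 2 + 2 / \<alpha>;
  the equation for \<alpha> makes the two values agree.\<close>

lemma test_fn_row_sum:
  assumes "finite W" "k \<in> W" "l \<in> W" "k \<noteq> l" "u \<in> W" "\<alpha> > 0"
    and alpha: "2 - \<alpha> = (real (card W) - 2) * \<alpha> * (\<alpha> - 1)"
  shows "(\<Sum>v\<in>W. test_fn \<alpha> k l u v) = real (card W) - 2 + 2 / \<alpha>"
proof -
  define R where "R = W - {k, l}"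
  have "card {k, l} \<le> card W" using assms by (intro card_mono) auto
  then have card_R: "real (card R) = real (card W) - 2"
    using assms by (simp add: R_def card_Diff_subset of_nat_diff)
  have split: "(\<Sum>v\<in>W. f v) = f k + f l + (\<Sum>v\<in>R. f v)" for f :: "'a \<Rightarrow> real"
  proof -
    have "(\<Sum>v\<in>W. f v) = (\<Sum>v\<in>R. f v) + (\<Sum>v\<in>{k, l}. f v)"
      unfolding R_def by (rule sum.subset_diff) (use assms in auto)
    then show ?thesis using \<open>k \<noteq> l\<close> by simp
  qed
  show ?thesis
  proof (cases "u = k \<or> u = l")
    case True
    have "(\<Sum>v\<in>R. test_fn \<alpha> k l u v) = (\<Sum>v\<in>R. \<alpha>)"
      by (rule sum.cong) (use True in \<open>auto simp: test_fn_def R_def\<close>)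
    moreover have "test_fn \<alpha> k l u k + test_fn \<alpha> k l u l = 1" using True assms by (auto simp: test_fn_def)
    moreover have "1 + (real (card W) - 2) * \<alpha> = real (card W) - 2 + 2 / \<alpha>"
      using alpha \<open>\<alpha> > 0\<close> by (simp add: field_simps)
    ultimately show ?thesis unfolding split by (simp add: card_R)
  next
    case False
    have "(\<Sum>v\<in>R. test_fn \<alpha> k l u v) = (\<Sum>v\<in>R. 1)"
      by (rule sum.cong) (use False in \<open>auto simp: test_fn_def R_def\<close>)
    moreover have "test_fn \<alpha> k l u k + test_fn \<alpha> k l u l = 2 / \<alpha>" using False assms by (auto simp: test_fn_def)
    ultimately show ?thesis unfolding split by (simp add: card_R)
  qed
qed

lemma admissible_test_fn:
  fixes P :: "real \<Rightarrow> nat list \<times> nat list"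
  assumes "\<alpha> > 0" "\<epsilon> > 0" "\<delta> > 0" and P: "P \<in> borel \<rightarrow>\<^sub>M count_space UNIV"
    and excl: "\<And>x. x \<in> {0..<1} \<Longrightarrow> P x \<in> words b q \<times> words b q - Eed b \<gamma> \<psi> q x \<epsilon> \<delta>"
  shows "admissible b \<gamma> \<psi> q (\<lambda>x. test_fn \<alpha> (fst (P x)) (snd (P x)))"
proof -
  define V where "V = (\<lambda>x. test_fn \<alpha> (fst (P x)) (snd (P x)))"
  have "(\<lambda>x. V x u v) \<in> borel_measurable unitI" for u v
  proof -
    have "(\<lambda>x. (\<lambda>p. test_fn \<alpha> (fst p) (snd p) u v) (P x)) \<in> borel \<rightarrow>\<^sub>M borel"
      by (rule measurable_compose[OF P]) simp
    then show ?thesis unfolding V_def by (intro measurable_restrict_space1) simp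
  qed
  moreover have "V x u v \<ge> 0" for x u v unfolding V_def by (rule test_fn_nonneg[OF \<open>\<alpha> > 0\<close>])
  moreover have "1 \<le> V x u v * V x v u" if x: "x \<in> {0..<1}" and uv: "(u, v) \<in> Eed b \<gamma> \<psi> q x \<epsilon> \<delta>" for x u v
  proof -
    have "(u, v) \<noteq> P x" "(v, u) \<noteq> P x" using excl[OF x] uv Eed_swap[of u v] by auto
    then show ?thesis unfolding V_def by (cases "P x") (auto intro: test_fn_mult_ge_1[OF \<open>\<alpha> > 0\<close>])
  qed
  ultimately have "admissible b \<gamma> \<psi> q V"
    unfolding admissible_def using \<open>\<epsilon> > 0\<close> \<open>\<delta> > 0\<close> by blast
  then show ?thesis by (simp only: V_def)
qed

lemma sigma_le_of_row_sums:
  assumes adm: "admissible b \<gamma> \<psi> q V"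
    and rows: "\<And>x u. x \<in> {0..<1} \<Longrightarrow> u \<in> words b q \<Longrightarrow> (\<Sum>v\<in>words b q. V x u v) \<le> T"
  shows "sigma b \<gamma> \<psi> q \<le> ereal T"
proof -
  have fin: "finite (words b q)" by (rule finite_words)
  have Sigma_eq: "SigmaVw b q V (\<lambda>_. 1) x = (SUP u\<in>words b q. ereal (\<Sum>v\<in>words b q. V x u v))" for x
    by (simp add: SigmaVw_def)
  have "(\<lambda>x. V x u v) \<in> borel_measurable unitI" if "u \<in> words b q" "v \<in> words b q" for u v
    using adm that by (simp add: admissible_def)
  then have "SigmaVw b q V (\<lambda>_. 1) \<in> borel_measurable unitI"
    unfolding Sigma_eq using fin
    by (intro borel_measurable_SUP borel_measurable_ereal borel_measurable_sum) (auto intro: countable_finite)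
  moreover have "AE x in unitI. SigmaVw b q V (\<lambda>_. 1) x \<le> ereal T"
    by (rule AE_I2) (auto simp: Sigma_eq space_restrict_space intro!: SUP_least rows)
  ultimately have "esssup unitI (SigmaVw b q V (\<lambda>_. 1)) \<le> ereal T" by (rule esssup_I)
  moreover have "weight (\<lambda>_. 1)" by (auto simp: weight_def)
  ultimately show ?thesis
    unfolding sigma_def using adm by (intro INF_lower2[of "(\<lambda>_. 1, V)"]) auto
qed

theorem lemma2p6:
  fixes b q :: nat and \<gamma> \<alpha> :: real and \<psi> :: "real \<Rightarrow> real"
  assumes b: "b \<ge> 2"
    and gam: "1 / real b < \<gamma>" "\<gamma> < 1"
    and per: "\<forall>x. \<psi> (x + 1) = \<psi> x"
    and C1: "\<exists>\<psi>'. (\<forall>x. (\<psi> has_real_derivative \<psi>' x) (at x)) \<and> continuous_on UNIV \<psi>'"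
    and q: "q \<ge> 1" "b ^ q \<ge> 2"
    and E: "\<forall>x\<in>{0..<1}. E b \<gamma> \<psi> q x \<noteq> words b q \<times> words b q"
    and alpha: "\<alpha> > 1" "2 - \<alpha> = (real b ^ q - 2) * \<alpha> * (\<alpha> - 1)"
  shows "sigma b \<gamma> \<psi> q \<le> ereal (real b ^ q - 2 + 2 / \<alpha>)"
proof -
  obtain \<psi>' where "\<And>x. (\<psi> has_real_derivative \<psi>' x) (at x)" "continuous_on UNIV \<psi>'"
    using C1 by blast
  moreover have "0 \<le> \<gamma>" using gam(1) by (smt (verit) divide_nonneg_nonneg of_nat_0_le_iff)
  ultimately interpret digit_series b \<gamma> \<psi> \<psi>'
    using b gam(2) per by unfold_locales auto
  obtain \<epsilon> \<delta> P where "\<epsilon> > 0" "\<delta> > 0" "P \<in> borel \<rightarrow>\<^sub>M count_space UNIV"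
    and P: "\<And>x. x \<in> {0..<1} \<Longrightarrow> P x \<in> words b q \<times> words b q - Eed b \<gamma> \<psi> q x \<epsilon> \<delta>"
    using excluded_pair_step_selection[OF E] by blast
  have rows: "(\<Sum>v\<in>words b q. test_fn \<alpha> (fst (P x)) (snd (P x)) u v) = real b ^ q - 2 + 2 / \<alpha>"
    if "x \<in> {0..<1}" "u \<in> words b q" for x u
  proof -
    have "fst (P x) \<noteq> snd (P x)"
      using P[OF that(1)] Eed_diag[OF b_pos _ less_imp_le less_imp_le, OF _ \<open>\<epsilon> > 0\<close> \<open>\<delta> > 0\<close>]
      by (cases "P x") auto
    then show ?thesis
      using test_fn_row_sum[OF finite_words _ _ _ that(2)] P[OF that(1)] alpha
      by (auto simp: card_words)
  qed
  have "admissible b \<gamma> \<psi> q (\<lambda>x. test_fn \<alpha> (fst (P x)) (snd (P x)))"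
    by (rule admissible_test_fn[OF _ \<open>\<epsilon> > 0\<close> \<open>\<delta> > 0\<close> \<open>P \<in> _\<close> P]) (use alpha(1) in simp)
  then show ?thesis by (rule sigma_le_of_row_sums) (simp add: rows)
qed

end
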